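(* The monoid $\operatorname{NDPF}^{(1)}_N$ is $\mathcal{J}$-trivial.
   Context: $\operatorname{NDPF}^{(1)}_N$ is the set of functions $f:\mathbb{Z}\to\mathbb{Z}$ that are regressive ($f(i)\le i$), order preserving and skew periodic ($f(i+N)=f(i)+N$), excluding the shift functions $i\mapsto i-t$ with $t\ne 0$, a monoid under composition. A monoid $M$ is $\mathcal J$-trivial if for $f,g\in M$, $MfM=MgM$ implies $f=g$. *)

theory Defs
  imports Main
begin

definition NDPF1 :: "int \<Rightarrow> (int \<Rightarrow> int) set" where
  "NDPF1 N = {f. (\<forall>i. f i \<le> i) \<and> mono f \<and> (\<forall>i. f (i + N) = f i + N)
                 \<and> \<not> (\<exists>t. t \<noteq> 0 \<and> f = (\<lambda>i. i - t))}"

definition two_sided_ideal :: "('a \<Rightarrow> 'a) set \<Rightarrow> ('a \<Rightarrow> 'a) \<Rightarrow> ('a \<Rightarrow> 'a) set" where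
  "two_sided_ideal M f = {a \<circ> f \<circ> b | a b. a \<in> M \<and> b \<in> M}"

definition J_trivial :: "('a \<Rightarrow> 'a) set \<Rightarrow> bool" where
  "J_trivial M \<longleftrightarrow> (\<forall>f\<in>M. \<forall>g\<in>M. two_sided_ideal M f = two_sided_ideal M g \<longrightarrow> f = g)"

end

theory Submission
  imports Defs
begin

text \<open>Every element of the ideal generated by g lies pointwise below g, because the outer factor
  is regressive and g is monotone with a regressive argument. Two elements generating the same
  ideal therefore lie below each other. This only needs the identity in the monoid.\<close>

lemma id_mem_NDPF1: "id \<in> NDPF1 N"
proof -
  have "id \<noteq> (\<lambda>i::int. i - t)" if "t \<noteq> 0" for t
    using that fun_cong[of id "\<lambda>i. i - t" 0] by auto
  then show ?thesis
    unfolding NDPF1_def by (auto simp: mono_def)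
qed

lemma self_mem_two_sided_ideal:
  assumes "id \<in> M"
  shows "f \<in> two_sided_ideal M f"
proof -
  have "f = id \<circ> f \<circ> id" by simp
  then show ?thesis unfolding two_sided_ideal_def using assms by blast
qed

lemma two_sided_ideal_le:
  fixes g :: "'a::order \<Rightarrow> 'a"
  assumes regressive: "\<And>h x. h \<in> M \<Longrightarrow> h x \<le> x"
    and "mono g" and "h \<in> two_sided_ideal M g"
  shows "h x \<le> g x"
proof -
  obtain a b where "a \<in> M" "b \<in> M" and h: "h = a \<circ> g \<circ> b"
    using assms(3) unfolding two_sided_ideal_def by blast
  have "a (g (b x)) \<le> g (b x)" using regressive[OF \<open>a \<in> M\<close>] .
  also have "\<dots> \<le> g x" using \<open>mono g\<close> regressive[OF \<open>b \<in> M\<close>] by (rule monoD)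
  finally show ?thesis by (simp add: h)
qed

lemma J_trivial_if_regressive_mono:
  fixes M :: "('a::order \<Rightarrow> 'a) set"
  assumes "id \<in> M"
    and regressive: "\<And>h x. h \<in> M \<Longrightarrow> h x \<le> x"
    and mono: "\<And>h. h \<in> M \<Longrightarrow> mono h"
  shows "J_trivial M"
  unfolding J_trivial_def
proof (intro ballI impI ext)
  fix f g x assume "f \<in> M" "g \<in> M" and eq: "two_sided_ideal M f = two_sided_ideal M g"
  have "f \<in> two_sided_ideal M g" "g \<in> two_sided_ideal M f"
    using self_mem_two_sided_ideal[OF \<open>id \<in> M\<close>] eq by auto
  then have "f x \<le> g x" "g x \<le> f x"
    by (metis two_sided_ideal_le regressive mono \<open>f \<in> M\<close> \<open>g \<in> M\<close>)+
  then show "f x = g x" by (rule antisym)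
qed

theorem mainTheorem7:
  fixes N :: int
  assumes "N \<ge> 1"
  shows "J_trivial (NDPF1 N)"
  by (rule J_trivial_if_regressive_mono[OF id_mem_NDPF1]) (auto simp: NDPF1_def)

end
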